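(* Let $\preceq$ be a left quasi-order on a group $G$. If $a,b,c\in G$ satisfy $[a,b]=a^{-1}b^{-1}ab=c^{r}$ for some $r\in\mathbb{Z}\setminus\{0\}$, and $c$ commutes with both $a$ and $b$, then either $c\ll a$ or $c\ll b$.
   Context: A left quasi-order on a group $G$ is a binary relation $\preceq$ on $G$ such that: (1) for all $g,h\in G$, $g\preceq h$ or $h\preceq g$; (2) for all $f,g,h\in G$, $f\preceq g$ and $g\preceq h$ imply $f\preceq h$; (3) for all $f,g,h\in G$, $g\preceq h$ implies $fg\preceq fh$. For $g,h\in G$ one writes $g\ll h$ if either $g^k\preceq h$ for all $k\in\mathbb{Z}$, or $g^k\preceq h^{-1}$ for all $k\in\mathbb{Z}$. *)

theory Defs
  imports "HOL-Algebra.Group"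
begin

definition left_quasi_order :: "('a, 'b) monoid_scheme \<Rightarrow> ('a \<Rightarrow> 'a \<Rightarrow> bool) \<Rightarrow> bool" where
  "left_quasi_order G R \<longleftrightarrow>
     (\<forall>g\<in>carrier G. \<forall>h\<in>carrier G. R g h \<or> R h g) \<and>
     (\<forall>f\<in>carrier G. \<forall>g\<in>carrier G. \<forall>h\<in>carrier G. R f g \<longrightarrow> R g h \<longrightarrow> R f h) \<and>
     (\<forall>f\<in>carrier G. \<forall>g\<in>carrier G. \<forall>h\<in>carrier G. R g h \<longrightarrow> R (f \<otimes>\<^bsub>G\<^esub> g) (f \<otimes>\<^bsub>G\<^esub> h))"

definition much_less :: "('a, 'b) monoid_scheme \<Rightarrow> ('a \<Rightarrow> 'a \<Rightarrow> bool) \<Rightarrow> 'a \<Rightarrow> 'a \<Rightarrow> bool" where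
  "much_less G R g h \<longleftrightarrow>
     (\<forall>k::int. R (g [^]\<^bsub>G\<^esub> k) h) \<or> (\<forall>k::int. R (g [^]\<^bsub>G\<^esub> k) (inv\<^bsub>G\<^esub> h))"

end

(* If neither c << a nor c << b, then a and b are trapped between powers of c:
   c^p <= a <= c^q and c^u <= b <= c^v.  As c commutes with a and b, such bounds are
   compatible with products, so a^n b^n <= c^(n(q+v)), while a^n b^n = b^n a^n c^(r n^2)
   lies above c^(n(p+u) + r n^2).  For r > 0 and large n this contradicts the strict
   monotonicity of k |-> c^k when 1 < c.  The case r < 0 reduces to this by swapping a and b,
   and the case c < 1 by passing to c^-1; if c is equivalent to 1, then so are all its
   powers, and c << a holds outright. *)

theory Submission
  imports Defs "HOL-Algebra.Generated_Groups"
begin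

definition centralizer :: "('a, 'b) monoid_scheme \<Rightarrow> 'a \<Rightarrow> 'a set" where
  "centralizer G c = {x \<in> carrier G. c \<otimes>\<^bsub>G\<^esub> x = x \<otimes>\<^bsub>G\<^esub> c}"

context group
begin

lemma subgroup_centralizer:
  assumes "c \<in> carrier G"
  shows "subgroup (centralizer G c) G"
proof (rule subgroupI)
  show "inv x \<in> centralizer G c" if "x \<in> centralizer G c" for x
  proof -
    have x: "x \<in> carrier G" "c \<otimes> x = x \<otimes> c"
      using that by (auto simp: centralizer_def)
    have "c \<otimes> inv x = inv x \<otimes> (x \<otimes> c) \<otimes> inv x"
      using x assms by (simp add: m_assoc[symmetric])
    also have "\<dots> = inv x \<otimes> (c \<otimes> x) \<otimes> inv x"
      using x by simp
    also have "\<dots> = inv x \<otimes> c"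
      using x(1) assms by (simp add: m_assoc)
    finally show ?thesis
      using x by (simp add: centralizer_def)
  qed
  show "x \<otimes> y \<in> centralizer G c" if "x \<in> centralizer G c" "y \<in> centralizer G c" for x y
    using that assms by (auto simp: centralizer_def m_assoc[symmetric]) (simp add: m_assoc)
qed (use assms in \<open>auto simp: centralizer_def\<close>)

lemma int_pow_mem_centralizer:
  assumes "x \<in> centralizer G c" "c \<in> carrier G"
  shows "x [^] (k::int) \<in> centralizer G c"
  using subgroup_int_pow_closed[OF subgroup_centralizer] assms by blast

lemma nat_pow_mem_centralizer:
  assumes "x \<in> centralizer G c" "c \<in> carrier G"
  shows "x [^] (n::nat) \<in> centralizer G c"
  using int_pow_mem_centralizer[OF assms, of "int n"] by (simp add: int_pow_int)

lemma centralizer_int_pow_commute: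
  assumes "x \<in> centralizer G c" "c \<in> carrier G"
  shows "c [^] (k::int) \<otimes> x = x \<otimes> c [^] k"
proof -
  have "c \<in> centralizer G x" "x \<in> carrier G"
    using assms by (auto simp: centralizer_def)
  then have "c [^] k \<in> centralizer G x"
    by (rule int_pow_mem_centralizer)
  then show ?thesis
    by (simp add: centralizer_def)
qed

lemma centralizer_inv:
  assumes "c \<in> carrier G"
  shows "centralizer G (inv c) = centralizer G c"
proof -
  have "centralizer G c \<subseteq> centralizer G (inv c)" if "c \<in> carrier G" for c
    using centralizer_int_pow_commute[of _ c "- 1"] that
    by (auto simp: int_pow_neg centralizer_def)
  from this[of c] this[of "inv c"] assms show ?thesis
    by auto
qed

lemma commutator_eq_imp_mult_swap:
  assumes "a \<in> carrier G" "b \<in> carrier G" "inv a \<otimes> inv b \<otimes> a \<otimes> b = z"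
  shows "a \<otimes> b = b \<otimes> a \<otimes> z"
proof -
  have "b \<otimes> a \<otimes> z = (b \<otimes> a) \<otimes> inv (b \<otimes> a) \<otimes> (a \<otimes> b)"
    unfolding assms(3)[symmetric] using assms(1,2) by (simp add: inv_mult_group m_assoc)
  also have "\<dots> = a \<otimes> b"
    using assms by simp
  finally show ?thesis
    by simp
qed

lemma nat_pow_mult_swap:
  assumes x: "x \<in> carrier G" and y: "y \<in> carrier G" and z: "z \<in> centralizer G x"
    and swap: "x \<otimes> y = y \<otimes> x \<otimes> z"
  shows "x [^] (n::nat) \<otimes> y = y \<otimes> x [^] n \<otimes> z [^] n"
proof (induction n)
  case 0
  show ?case using y by simp
next
  case (Suc n)
  have zx: "z \<in> carrier G" "x \<otimes> z = z \<otimes> x"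
    using z by (auto simp: centralizer_def)
  have "x [^] Suc n \<otimes> y = x [^] n \<otimes> (y \<otimes> x \<otimes> z)"
    using x y by (simp add: m_assoc swap[symmetric])
  also have "\<dots> = (x [^] n \<otimes> y) \<otimes> x \<otimes> z"
    using x y zx by (simp add: m_assoc)
  also have "\<dots> = y \<otimes> x [^] n \<otimes> (z [^] n \<otimes> x) \<otimes> z"
    using x y zx by (simp add: Suc.IH m_assoc)
  also have "\<dots> = y \<otimes> x [^] n \<otimes> (x \<otimes> z [^] n) \<otimes> z"
    using x zx by (simp add: group_commutes_pow)
  also have "\<dots> = y \<otimes> x [^] Suc n \<otimes> z [^] Suc n"
    using x y zx by (simp add: m_assoc)
  finally show ?case .
qed

lemma nat_pow_mult_nat_pow_swap:
  assumes x: "x \<in> carrier G" and y: "y \<in> carrier G"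
    and zx: "z \<in> centralizer G x" and zy: "z \<in> centralizer G y"
    and swap: "x \<otimes> y = y \<otimes> x \<otimes> z"
  shows "x [^] (n::nat) \<otimes> y [^] (m::nat) = y [^] m \<otimes> x [^] n \<otimes> z [^] (n * m)"
proof (induction m)
  case 0
  show ?case using x by simp
next
  case (Suc m)
  have z: "z \<in> carrier G" "y \<otimes> z = z \<otimes> y"
    using zy by (auto simp: centralizer_def)
  have "x [^] n \<otimes> y [^] Suc m = y [^] m \<otimes> x [^] n \<otimes> (z [^] (n * m) \<otimes> y)"
    using x y z by (simp add: m_assoc[symmetric] Suc.IH)
  also have "\<dots> = y [^] m \<otimes> (x [^] n \<otimes> y) \<otimes> z [^] (n * m)"
    using x y z by (simp add: group_commutes_pow m_assoc)
  also have "\<dots> = y [^] m \<otimes> (y \<otimes> x [^] n \<otimes> z [^] n) \<otimes> z [^] (n * m)"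
    using nat_pow_mult_swap[OF x y zx swap] by simp
  also have "\<dots> = y [^] Suc m \<otimes> x [^] n \<otimes> z [^] (n * Suc m)"
    using x y z by (simp add: m_assoc nat_pow_mult add.commute)
  finally show ?case .
qed

end

lemma left_quasi_order_converse:
  "left_quasi_order G R \<Longrightarrow> left_quasi_order G (\<lambda>x y. R y x)"
  unfolding left_quasi_order_def by blast

locale left_quasi_ordered_group = group G for G (structure) +
  fixes R :: "'a \<Rightarrow> 'a \<Rightarrow> bool"
  assumes left_quasi_order: "left_quasi_order G R"
begin

lemma le_total: "x \<in> carrier G \<Longrightarrow> y \<in> carrier G \<Longrightarrow> R x y \<or> R y x"
  using left_quasi_order unfolding left_quasi_order_def by blast

lemma le_refl: "x \<in> carrier G \<Longrightarrow> R x x"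
  using le_total by blast

lemma le_trans:
  "R x y \<Longrightarrow> R y z \<Longrightarrow> x \<in> carrier G \<Longrightarrow> y \<in> carrier G \<Longrightarrow> z \<in> carrier G \<Longrightarrow> R x z"
  using left_quasi_order unfolding left_quasi_order_def by blast

lemma mult_left_mono:
  "R x y \<Longrightarrow> z \<in> carrier G \<Longrightarrow> x \<in> carrier G \<Longrightarrow> y \<in> carrier G \<Longrightarrow> R (z \<otimes> x) (z \<otimes> y)"
  using left_quasi_order unfolding left_quasi_order_def by blast

lemma mult_left_le_iff:
  assumes "z \<in> carrier G" "x \<in> carrier G" "y \<in> carrier G"
  shows "R (z \<otimes> x) (z \<otimes> y) \<longleftrightarrow> R x y"
proof
  assume "R (z \<otimes> x) (z \<otimes> y)"
  then have "R (inv z \<otimes> (z \<otimes> x)) (inv z \<otimes> (z \<otimes> y))"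
    by (rule mult_left_mono) (use assms in auto)
  then show "R x y"
    using assms by (simp add: m_assoc[symmetric])
qed (use assms mult_left_mono in auto)

lemma one_le_inv_iff: "c \<in> carrier G \<Longrightarrow> R \<one> (inv c) \<longleftrightarrow> R c \<one>"
  using mult_left_le_iff[of "inv c" c \<one>] by simp

lemma inv_le_one_iff: "c \<in> carrier G \<Longrightarrow> R (inv c) \<one> \<longleftrightarrow> R \<one> c"
  using mult_left_le_iff[of "inv c" \<one> c] by simp

lemma int_pow_le_mult:
  assumes x: "x \<in> centralizer G c" and y: "y \<in> carrier G" and c: "c \<in> carrier G"
    and "R (c [^] (p::int)) x" "R (c [^] (s::int)) y"
  shows "R (c [^] (p + s)) (x \<otimes> y)"
proof -
  have xc: "x \<in> carrier G"
    using x by (simp add: centralizer_def)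
  have "R (c [^] s \<otimes> c [^] p) (c [^] s \<otimes> x)"
    using assms xc by (intro mult_left_mono) auto
  moreover have "c [^] s \<otimes> c [^] p = c [^] (p + s)"
    using c by (simp add: int_pow_mult[symmetric] add.commute)
  ultimately have "R (c [^] (p + s)) (x \<otimes> c [^] s)"
    using c x by (simp add: centralizer_int_pow_commute)
  moreover have "R (x \<otimes> c [^] s) (x \<otimes> y)"
    using assms xc by (intro mult_left_mono) auto
  ultimately show ?thesis
    using xc y c by (auto intro: le_trans)
qed

lemma int_pow_le_nat_pow:
  assumes x: "x \<in> centralizer G c" and c: "c \<in> carrier G" and "R (c [^] (p::int)) x"
  shows "R (c [^] (int n * p)) (x [^] n)"
proof (induction n)
  case 0
  show ?case by (simp add: le_refl)
next
  case (Suc n)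
  have "R (c [^] (int n * p + p)) (x [^] n \<otimes> x)"
    using assms Suc.IH
    by (intro int_pow_le_mult nat_pow_mem_centralizer) (auto simp: centralizer_def)
  then show ?case
    by (simp add: algebra_simps)
qed

lemma int_pow_mono:
  assumes c: "c \<in> carrier G" and "R \<one> c" and "(k::int) \<le> l"
  shows "R (c [^] k) (c [^] l)"
proof -
  have "c \<in> centralizer G c"
    using c by (simp add: centralizer_def)
  then have "R \<one> (c [^] nat (l - k))"
    using int_pow_le_nat_pow[of c c 0 "nat (l - k)"] assms by simp
  then have "R (c [^] k \<otimes> \<one>) (c [^] k \<otimes> c [^] (l - k))"
    using c \<open>k \<le> l\<close> by (intro mult_left_mono) auto
  then show ?thesis
    using c by (simp add: int_pow_mult[symmetric])
qed

lemma int_pow_le_imp_le_one: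
  assumes c: "c \<in> carrier G" and "R \<one> c" and "R (c [^] l) (c [^] k)" and "(k::int) < l"
  shows "R c \<one>"
proof -
  have "R (c [^] (k + 1)) (c [^] k)"
    using assms int_pow_mono[of c "k + 1" l] by (auto intro: le_trans)
  moreover have "c [^] (k + 1) = c [^] k \<otimes> c" "c [^] k = c [^] k \<otimes> \<one>"
    using c by (simp_all add: int_pow_mult)
  ultimately show ?thesis
    using c mult_left_le_iff[of "c [^] k" c \<one>] by simp
qed

interpretation converse: left_quasi_ordered_group G "\<lambda>x y. R y x"
  by unfold_locales (rule left_quasi_order_converse[OF left_quasi_order])

lemma int_pow_bounds_if_not_much_less:
  assumes a: "a \<in> centralizer G c" and c: "c \<in> carrier G" and "\<not> much_less G R c a"
  obtains p q :: int where "R (c [^] p) a" "R a (c [^] q)"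
proof -
  have a': "a \<in> carrier G"
    using a by (simp add: centralizer_def)
  obtain q i :: int where "\<not> R (c [^] q) a" "\<not> R (c [^] i) (inv a)"
    using assms unfolding much_less_def by blast
  then have upper: "R a (c [^] q)" and "R (inv a) (c [^] i)"
    using a' c le_total by auto
  then have "R (a \<otimes> inv a) (a \<otimes> c [^] i)"
    using a' c by (intro mult_left_mono) auto
  then have "R \<one> (c [^] i \<otimes> a)"
    using a c a' by (simp add: centralizer_int_pow_commute)
  then have "R (c [^] (- i) \<otimes> \<one>) (c [^] (- i) \<otimes> (c [^] i \<otimes> a))"
    using a' c by (intro mult_left_mono) auto
  then have "R (c [^] (- i)) a"
    using a' c by (simp add: m_assoc[symmetric] int_pow_mult[symmetric])
  with upper show ?thesis
    using that by blast
qed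

lemma much_less_inv_iff:
  assumes "c \<in> carrier G"
  shows "much_less G R (inv c) x \<longleftrightarrow> much_less G R c x"
proof -
  have neg: "(\<forall>k::int. P (c [^] (- k))) \<longleftrightarrow> (\<forall>k::int. P (c [^] k))" for P
    by (metis minus_minus)
  show ?thesis
    using assms neg[of "\<lambda>y. R y x"] neg[of "\<lambda>y. R y (inv x)"]
    by (simp add: much_less_def int_pow_inv int_pow_neg[symmetric])
qed

lemma much_less_if_equiv_one:
  assumes c: "c \<in> carrier G" and a: "a \<in> carrier G" and "R c \<one>" "R \<one> c"
  shows "much_less G R c a"
proof -
  have below_one: "R (c [^] k) \<one>" for k :: int
    using int_pow_mono[of c k 0] converse.int_pow_mono[of c 0 k] assms by (cases "k \<le> 0") auto
  show ?thesis
  proof (cases "R \<one> a")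
    case True
    then show ?thesis
      using below_one a c by (auto simp: much_less_def intro: le_trans)
  next
    case False
    then have "R (inv a \<otimes> a) (inv a \<otimes> \<one>)"
      using a le_total by (intro mult_left_mono) auto
    then have "R \<one> (inv a)"
      using a by simp
    then show ?thesis
      using below_one a c by (auto simp: much_less_def intro: le_trans)
  qed
qed

lemma much_less_if_commutator_pos:
  assumes a: "a \<in> centralizer G c" and b: "b \<in> centralizer G c" and c: "c \<in> carrier G"
    and c_pos: "R \<one> c" "\<not> R c \<one>" and r: "0 < r"
    and swap: "a \<otimes> b = b \<otimes> a \<otimes> c [^] (r::int)"
  shows "much_less G R c a \<or> much_less G R c b"
proof (rule ccontr)
  assume "\<not> ?thesis"
  then obtain p q u v :: int
    where bounds: "R (c [^] p) a" "R a (c [^] q)" "R (c [^] u) b" "R b (c [^] v)"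
    using int_pow_bounds_if_not_much_less a b c by metis
  \<comment> \<open>n exceeds q + v - p - u, so the quadratic exponent r n^2 outgrows the linear bounds\<close>
  define n :: nat where "n = nat \<bar>q + v - p - u\<bar> + 1"
  have ab: "a \<in> carrier G" "b \<in> carrier G"
    using a b by (auto simp: centralizer_def)
  have pow_centralizer: "a [^] n \<in> centralizer G c" "b [^] n \<in> centralizer G c"
    "b [^] n \<otimes> a [^] n \<in> centralizer G c"
    using a b c nat_pow_mem_centralizer subgroup.m_closed[OF subgroup_centralizer] by auto
  have "a [^] n \<otimes> b [^] n = b [^] n \<otimes> a [^] n \<otimes> (c [^] r) [^] (n * n)"
    using ab c a b swap
    by (intro nat_pow_mult_nat_pow_swap) (auto simp: centralizer_def centralizer_int_pow_commute)
  also have "\<dots> = b [^] n \<otimes> a [^] n \<otimes> c [^] (r * int n * int n)"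
    using c by (simp add: int_pow_int[symmetric] int_pow_pow mult.assoc)
  finally have commute_pow:
    "a [^] n \<otimes> b [^] n = b [^] n \<otimes> a [^] n \<otimes> c [^] (r * int n * int n)" .
  have lower_swapped: "R (c [^] (int n * u + int n * p)) (b [^] n \<otimes> a [^] n)"
    using pow_centralizer a b ab c bounds by (intro int_pow_le_mult int_pow_le_nat_pow) auto
  have lower: "R (c [^] (int n * u + int n * p + r * int n * int n)) (a [^] n \<otimes> b [^] n)"
    unfolding commute_pow
    using int_pow_le_mult[OF pow_centralizer(3) _ c lower_swapped le_refl] c by simp
  have upper: "R (a [^] n \<otimes> b [^] n) (c [^] (int n * q + int n * v))"
    using pow_centralizer a b ab c bounds
    by (intro converse.int_pow_le_mult converse.int_pow_le_nat_pow) auto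
  have "int n * (q + v - p - u) < int n * int n"
    by (intro mult_strict_left_mono) (auto simp: n_def)
  also have "\<dots> \<le> r * int n * int n"
    using r mult_right_mono[of 1 r "int n * int n"] by (simp add: mult.assoc)
  finally have "int n * q + int n * v < int n * u + int n * p + r * int n * int n"
    by (simp add: algebra_simps)
  moreover have
    "R (c [^] (int n * u + int n * p + r * int n * int n)) (c [^] (int n * q + int n * v))"
    using lower upper ab c by (auto intro: le_trans)
  ultimately have "R c \<one>"
    using c c_pos by (intro int_pow_le_imp_le_one) auto
  with c_pos show False
    by simp
qed

lemma much_less_if_commutator:
  assumes a: "a \<in> centralizer G c" and b: "b \<in> centralizer G c" and c: "c \<in> carrier G"
    and c_pos: "R \<one> c" "\<not> R c \<one>" and r: "r \<noteq> 0"
    and swap: "a \<otimes> b = b \<otimes> a \<otimes> c [^] (r::int)"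
  shows "much_less G R c a \<or> much_less G R c b"
proof (cases "0 < r")
  case True
  then show ?thesis
    by (rule much_less_if_commutator_pos[OF a b c c_pos _ swap])
next
  case False
  have "a \<in> carrier G" "b \<in> carrier G"
    using a b by (auto simp: centralizer_def)
  then have "b \<otimes> a = a \<otimes> b \<otimes> c [^] (- r)"
    using c by (simp add: swap m_assoc int_pow_mult[symmetric])
  moreover have "0 < - r"
    using False r by simp
  ultimately show ?thesis
    using much_less_if_commutator_pos[OF b a c c_pos] by blast
qed

lemma much_less_if_commutator_not_equiv_one:
  assumes a: "a \<in> centralizer G c" and b: "b \<in> centralizer G c" and c: "c \<in> carrier G"
    and c_not_one: "\<not> (R c \<one> \<and> R \<one> c)" and r: "r \<noteq> 0"
    and swap: "a \<otimes> b = b \<otimes> a \<otimes> c [^] (r::int)"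
  shows "much_less G R c a \<or> much_less G R c b"
proof (cases "R \<one> c")
  case True
  with assms show ?thesis
    by (intro much_less_if_commutator) auto
next
  case False
  have "much_less G R (inv c) a \<or> much_less G R (inv c) b"
  proof (rule much_less_if_commutator)
    show "a \<otimes> b = b \<otimes> a \<otimes> inv c [^] (- r)"
      using swap c by (simp add: int_pow_inv int_pow_neg)
  qed (use assms False le_total[of c \<one>]
       in \<open>auto simp: centralizer_inv one_le_inv_iff inv_le_one_iff\<close>)
  then show ?thesis
    using c by (simp add: much_less_inv_iff)
qed

end

theorem lemma5p1:
  fixes G (structure) and R :: "'a \<Rightarrow> 'a \<Rightarrow> bool" and a b c :: 'a and r :: int
  assumes "group G"
    and "left_quasi_order G R"
    and "a \<in> carrier G" and "b \<in> carrier G" and "c \<in> carrier G"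
    and "r \<noteq> 0"
    and "inv a \<otimes> inv b \<otimes> a \<otimes> b = c [^] r"
    and "c \<otimes> a = a \<otimes> c" and "c \<otimes> b = b \<otimes> c"
  shows "much_less G R c a \<or> much_less G R c b"
proof -
  interpret left_quasi_ordered_group G R
    using assms(1,2)
    by (rule left_quasi_ordered_group.intro[OF _ left_quasi_ordered_group_axioms.intro])
  have centralizer: "a \<in> centralizer G c" "b \<in> centralizer G c"
    using assms(3,4,8,9) by (auto simp: centralizer_def)
  have swap: "a \<otimes> b = b \<otimes> a \<otimes> c [^] r"
    using assms(3,4,7) by (rule commutator_eq_imp_mult_swap)
  show ?thesis
  proof (cases "R c \<one> \<and> R \<one> c")
    case True
    then show ?thesis
      using assms(3,5) much_less_if_equiv_one by blast
  next
    case False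
    then show ?thesis
      using much_less_if_commutator_not_equiv_one[OF centralizer assms(5) _ assms(6) swap] by blast
  qed
qed

end
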